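(* Let $k\in\mathbb{Z}$ and let $p$ be a positive integer. Then $$\sum_{\nu=0}^{p}\binom{p}{\nu}\frac{E_{\nu}^{(k)}}{p-\nu+2}=\frac{1}{p+1}E_{p+1}^{(k)}(1)-\frac{1}{(p+1)(p+2)}E_{p+2}^{(k)}(1)+\frac{1}{(p+1)(p+2)}E_{p+2}^{(k)}.$$
   Context: For $k\in\mathbb{Z}$, $\mathrm{Ei}_k(x)=\sum_{n=1}^{\infty}\frac{x^n}{n^k(n-1)!}$; the poly-Genocchi polynomials $G_n^{(k)}(x)$ are defined by $\frac{2\,\mathrm{Ei}_k(\log(1+t))}{e^t+1}e^{xt}=\sum_{n=0}^{\infty}G_n^{(k)}(x)\frac{t^n}{n!}$; the poly-Euler polynomials are $E_n^{(k)}(x)=\frac{G_{n+1}^{(k)}(x)}{n+1}$ ($n\ge0$), and $E_n^{(k)}=E_n^{(k)}(0)$. *)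

theory Defs
  imports "HOL-Computational_Algebra.Formal_Power_Series"
begin

definition Ei_fps :: "int \<Rightarrow> real fps" where
  "Ei_fps k = Abs_fps (\<lambda>n. if n = 0 then 0
      else 1 / ((of_nat n) powi k * fact (n - 1)))"

definition log1p_fps :: "real fps" where
  "log1p_fps = Abs_fps (\<lambda>n. if n = 0 then 0 else (-1) ^ (n + 1) / of_nat n)"

definition polyGenocchi_gf :: "int \<Rightarrow> real \<Rightarrow> real fps" where
  "polyGenocchi_gf k x =
     fps_const 2 * (Ei_fps k oo log1p_fps) * inverse (fps_exp 1 + 1) * fps_exp x"

definition polyGenocchi :: "int \<Rightarrow> nat \<Rightarrow> real \<Rightarrow> real" where
  "polyGenocchi k n x = fact n * fps_nth (polyGenocchi_gf k x) n"

definition polyEuler :: "int \<Rightarrow> nat \<Rightarrow> real \<Rightarrow> real" where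
  "polyEuler k n x = polyGenocchi k (n + 1) x / of_nat (n + 1)"

end

theory Submission
  imports Defs
begin

text \<open>The generating function of \<open>E\<^sub>n(x)\<close> is a power series in \<open>t\<close> times \<open>e\<^sup>x\<^sup>t\<close>, so the
  poly-Euler polynomials form an Appell sequence and \<open>E\<^sub>n(1) = \<Sum>\<^sub>i C(n,i) E\<^sub>i\<close>.
  Splitting \<open>C(p,\<nu>)/(p-\<nu>+2) = C(p+1,\<nu>)/(p+1) - C(p+2,\<nu>)/((p+1)(p+2))\<close> turns the
  left-hand side into the Appell expansions of \<open>E\<^sub>p\<^sub>+\<^sub>1(1)\<close> and \<open>E\<^sub>p\<^sub>+\<^sub>2(1)\<close> without their
  top terms; the terms of index \<open>p+1\<close> cancel and the one of index \<open>p+2\<close> is \<open>E\<^sub>p\<^sub>+\<^sub>2\<close>.\<close>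

lemma binomial_Suc_div_Suc:
  assumes "k \<le> n"
  shows "(of_nat (Suc n choose k) :: 'a::field_char_0) / of_nat (Suc n)
    = of_nat (n choose k) / of_nat (Suc n - k)"
proof -
  have "of_nat (Suc n - k) * (of_nat (Suc n choose k) :: 'a) = of_nat (Suc n) * of_nat (n choose k)"
    using binomial_absorb_comp[of "Suc n" k] by (metis diff_Suc_1 of_nat_mult)
  moreover have "(of_nat (Suc n - k) :: 'a) \<noteq> 0"
    using assms by (simp del: of_nat_diff)
  ultimately show ?thesis
    by (simp add: field_simps del: of_nat_Suc)
qed

lemma binomial_div_diff_add_2:
  assumes "k \<le> n"
  shows "(of_nat (n choose k) :: 'a::field_char_0) / (of_nat n - of_nat k + 2)
    = of_nat (Suc n choose k) / (of_nat n + 1)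
      - of_nat (Suc (Suc n) choose k) / ((of_nat n + 1) * (of_nat n + 2))"
proof -
  define d :: 'a where "d = of_nat (Suc n - k)"
  have d_Suc: "d + 1 = of_nat (Suc (Suc n) - k)" "d + 1 = of_nat n - of_nat k + 2"
    using assms by (simp_all add: d_def Suc_diff_le)
  have d_nonzero: "d \<noteq> 0" "d + 1 \<noteq> 0"
    using assms unfolding d_Suc(1) by (simp_all add: d_def del: of_nat_diff)
  have one: "of_nat (Suc n choose k) / (of_nat n + 1) = of_nat (n choose k) / d"
    using binomial_Suc_div_Suc[OF assms, where 'a='a]
    by (simp add: d_def add.commute del: of_nat_diff)
  have "of_nat (Suc (Suc n) choose k) / (of_nat n + 2) = (of_nat (Suc n choose k) :: 'a) / (d + 1)"
    using binomial_Suc_div_Suc[of k "Suc n", where 'a='a] assms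
    unfolding d_Suc(1) by (simp add: add.commute del: of_nat_diff)
  then have two: "of_nat (Suc (Suc n) choose k) / ((of_nat n + 1) * (of_nat n + 2))
      = (of_nat (n choose k) :: 'a) / (d * (d + 1))"
    by (metis one divide_divide_eq_left mult.commute)
  show ?thesis
    unfolding one two d_Suc(2)[symmetric] using d_nonzero
    by (simp add: divide_simps) (simp add: algebra_simps)
qed

lemma binomial_weighted_sum_div_diff_add_2:
  fixes a :: "nat \<Rightarrow> 'a::field_char_0" and n :: nat
  defines "D \<equiv> (of_nat n + 1) * (of_nat n + 2)"
  shows "(\<Sum>i=0..n. of_nat (n choose i) * a i / (of_nat n - of_nat i + 2))
    = (\<Sum>i=0..n+1. of_nat (n+1 choose i) * a i) / (of_nat n + 1)
      - (\<Sum>i=0..n+2. of_nat (n+2 choose i) * a i) / D + a (n+2) / D"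
proof -
  define S1 where "S1 = (\<Sum>i=0..n. of_nat (Suc n choose i) * a i)"
  define S2 where "S2 = (\<Sum>i=0..n. of_nat (Suc (Suc n) choose i) * a i)"
  have nonzero: "(of_nat n + 1 :: 'a) \<noteq> 0" "(of_nat n + 2 :: 'a) \<noteq> 0"
    using of_nat_neq_0[of n, where 'a='a] of_nat_neq_0[of "Suc n", where 'a='a]
    by (simp_all add: add.commute add.left_commute)
  have top1: "(\<Sum>i=0..n+1. of_nat (n+1 choose i) * a i) = S1 + a (n+1)"
    by (simp add: S1_def)
  have top2: "(\<Sum>i=0..n+2. of_nat (n+2 choose i) * a i)
      = S2 + (of_nat n + 2) * a (n+1) + a (n+2)"
    by (simp add: S2_def numeral_2_eq_2 algebra_simps)
  have "(\<Sum>i=0..n. of_nat (n choose i) * a i / (of_nat n - of_nat i + 2))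
      = (\<Sum>i=0..n. of_nat (Suc n choose i) * a i / (of_nat n + 1)
          - of_nat (Suc (Suc n) choose i) * a i / D)"
  proof (intro sum.cong refl)
    fix i assume "i \<in> {0..n}"
    then have "(of_nat (n choose i) :: 'a) / (of_nat n - of_nat i + 2)
        = of_nat (Suc n choose i) / (of_nat n + 1) - of_nat (Suc (Suc n) choose i) / D"
      unfolding D_def by (simp add: binomial_div_diff_add_2)
    from arg_cong[where f = "\<lambda>c. c * a i", OF this]
    show "of_nat (n choose i) * a i / (of_nat n - of_nat i + 2)
        = of_nat (Suc n choose i) * a i / (of_nat n + 1) - of_nat (Suc (Suc n) choose i) * a i / D"
      by (simp add: left_diff_distrib)
  qed
  also have "\<dots> = S1 / (of_nat n + 1) - S2 / D"
    by (simp add: S1_def S2_def sum_subtractf sum_divide_distrib)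
  finally have lhs: "(\<Sum>i=0..n. of_nat (n choose i) * a i / (of_nat n - of_nat i + 2))
      = S1 / (of_nat n + 1) - S2 / D" .
  have "(of_nat n + 2) * a (n+1) / D = a (n+1) / (of_nat n + 1)"
    unfolding D_def using nonzero by simp
  then show ?thesis
    unfolding lhs top1 top2 add_divide_distrib by simp
qed

lemma polyGenocchi_gf_eq: "polyGenocchi_gf k x = polyGenocchi_gf k 0 * fps_exp x"
  unfolding polyGenocchi_gf_def by simp

lemma polyGenocchi_0: "polyGenocchi k 0 x = 0"
proof -
  have "fps_nth (Ei_fps k oo log1p_fps) 0 = 0"
    by (simp add: fps_compose_def Ei_fps_def)
  then show ?thesis
    unfolding polyGenocchi_def polyGenocchi_gf_def by (simp add: mult.assoc)
qed

lemma polyGenocchi_appell: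
  "polyGenocchi k n x = (\<Sum>j=0..n. of_nat (n choose j) * polyGenocchi k j 0 * x ^ (n - j))"
proof -
  have "polyGenocchi k n x
      = fact n * (\<Sum>j=0..n. fps_nth (polyGenocchi_gf k 0) j * (x ^ (n - j) / fact (n - j)))"
    unfolding polyGenocchi_def by (subst polyGenocchi_gf_eq) (simp add: fps_mult_nth)
  also have "\<dots> = (\<Sum>j=0..n. of_nat (n choose j) * polyGenocchi k j 0 * x ^ (n - j))"
    unfolding sum_distrib_left
    by (intro sum.cong refl) (simp add: polyGenocchi_def binomial_fact field_simps)
  finally show ?thesis .
qed

lemma polyEuler_appell:
  "polyEuler k n x = (\<Sum>i=0..n. of_nat (n choose i) * polyEuler k i 0 * x ^ (n - i))"
proof -
  have "polyEuler k n x
      = (\<Sum>i=0..n. of_nat (Suc n choose Suc i) * polyGenocchi k (Suc i) 0 * x ^ (n - i))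
          / of_nat (Suc n)"
    unfolding polyEuler_def Suc_eq_plus1[symmetric] polyGenocchi_appell[of k "Suc n"]
    by (subst sum.atLeast0_atMost_Suc_shift) (simp add: polyGenocchi_0)
  also have "\<dots> = (\<Sum>i=0..n. of_nat (n choose i) * polyEuler k i 0 * x ^ (n - i))"
    unfolding sum_divide_distrib
  proof (intro sum.cong refl)
    fix i
    have "real (Suc n choose Suc i) = real (Suc n) * real (n choose i) / real (Suc i)"
      by (metis Suc_times_binomial_eq of_nat_mult nonzero_mult_div_cancel_right of_nat_eq_0_iff
          nat.distinct(1))
    then show "of_nat (Suc n choose Suc i) * polyGenocchi k (Suc i) 0 * x ^ (n - i) / of_nat (Suc n)
        = of_nat (n choose i) * polyEuler k i 0 * x ^ (n - i)"
      by (simp add: polyEuler_def del: of_nat_Suc)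
  qed
  finally show ?thesis .
qed

theorem lemma9:
  fixes k :: int and p :: nat
  assumes "p > 0"
  shows "(\<Sum>\<nu>=0..p. of_nat (p choose \<nu>) * polyEuler k \<nu> 0 / (of_nat p - of_nat \<nu> + 2))
    = polyEuler k (p + 1) 1 / (of_nat p + 1)
      - polyEuler k (p + 2) 1 / ((of_nat p + 1) * (of_nat p + 2))
      + polyEuler k (p + 2) 0 / ((of_nat p + 1) * (of_nat p + 2))"
  unfolding binomial_weighted_sum_div_diff_add_2 polyEuler_appell[of k _ 1] by simp

end
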